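(* If $G$ is a graph with $\operatorname{box}(G)=b$, then $G$ contains a simple cycle of length at least $b-3$.
   Context: The boxicity $\operatorname{box}(G)$ is the minimum $b$ such that $G$ is the intersection graph of axis-parallel boxes in $\mathbb{R}^b$ (products of $b$ closed intervals), one box per vertex. *)

theory Defs
  imports Complex_Main
begin

definition simple_graph :: "'a set \<Rightarrow> ('a \<Rightarrow> 'a \<Rightarrow> bool) \<Rightarrow> bool" where
  "simple_graph V E \<longleftrightarrow> finite V \<and> (\<forall>x y. E x y \<longrightarrow> x \<in> V \<and> y \<in> V)
     \<and> (\<forall>x y. E x y \<longrightarrow> E y x) \<and> (\<forall>x. \<not> E x x)"

definition box_rep :: "'a set \<Rightarrow> ('a \<Rightarrow> 'a \<Rightarrow> bool) \<Rightarrow> nat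
    \<Rightarrow> (nat \<Rightarrow> 'a \<Rightarrow> real) \<Rightarrow> (nat \<Rightarrow> 'a \<Rightarrow> real) \<Rightarrow> bool" where
  "box_rep V E b l u \<longleftrightarrow> (\<forall>v\<in>V. \<forall>i<b. l i v \<le> u i v) \<and>
     (\<forall>v\<in>V. \<forall>w\<in>V. v \<noteq> w \<longrightarrow>
        (E v w \<longleftrightarrow> (\<forall>i<b. l i v \<le> u i w \<and> l i w \<le> u i v)))"

definition boxicity :: "'a set \<Rightarrow> ('a \<Rightarrow> 'a \<Rightarrow> bool) \<Rightarrow> nat" where
  "boxicity V E = (LEAST b. \<exists>l u. box_rep V E b l u)"

text \<open>A simple cycle, as the cyclic list of its (distinct) vertices; its length is length cs.\<close>
definition simple_cycle :: "'a set \<Rightarrow> ('a \<Rightarrow> 'a \<Rightarrow> bool) \<Rightarrow> 'a list \<Rightarrow> bool" where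
  "simple_cycle V E cs \<longleftrightarrow> distinct cs \<and> 3 \<le> length cs \<and> set cs \<subseteq> V \<and>
     (\<forall>i<length cs. E (cs ! i) (cs ! ((i + 1) mod length cs)))"

end

theory Submission
  imports Defs
begin

text \<open>Take a normal spanning forest, in which every edge joins a vertex to one of its ancestors, and
  let \<open>W\<close> be the largest difference of depths spanned by an edge. If \<open>W \<ge> 2\<close>, such an edge closes
  the tree path between its ends to a cycle of length \<open>W + 1\<close>. On the other hand the graph has a box
  representation in dimension \<open>W + 3\<close> (and \<open>2\<close> if \<open>W \<le> 1\<close>): nested depth-first intervals separate
  incomparable vertices, depth windows of length \<open>W\<close> separate ancestors more than \<open>W\<close> levels apart,
  and one coordinate for each residue of the depth modulo \<open>W + 1\<close> separates the remaining
  non-adjacent ancestor pairs. Hence \<open>box G \<le> W + 3\<close> forces a cycle of length \<open>W + 1 \<ge> box G - 2\<close>.\<close>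

lemma mod_eq_close_imp_eq:
  fixes a b K :: nat
  assumes "a mod K = b mod K" "a - b < K" "b - a < K"
  shows "a = b"
proof -
  have dvd: "K dvd n - m" if "m mod K = n mod K" for m n :: nat
  proof (cases "m \<le> n")
    case True
    show ?thesis
      using mod_eq_dvd_iff_nat[OF True, THEN iffD1, OF that[symmetric]] .
  qed simp
  have "b - a = 0" "a - b = 0"
    using dvd[OF assms(1)] dvd[OF assms(1)[symmetric]] assms(2,3) dvd_imp_le not_less by blast+
  then show ?thesis
    by simp
qed

lemma boxicity_le:
  assumes "box_rep V E n l u"
  shows "boxicity V E \<le> n"
  unfolding boxicity_def by (rule Least_le) (use assms in blast)

text \<open>A rooted spanning forest of the graph, given by its reflexive ancestor relation \<open>anc\<close>,
  the depth \<open>d\<close> of the vertices and a nested interval labelling \<open>[pre v, post v]\<close> (discovery and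
  finishing times of a depth-first search).\<close>
locale normal_forest =
  fixes V :: "'a set" and E :: "'a \<Rightarrow> 'a \<Rightarrow> bool" and anc :: "'a \<Rightarrow> 'a \<Rightarrow> bool"
    and d pre post :: "'a \<Rightarrow> nat"
  assumes ancestor_in_V: "anc x y \<Longrightarrow> x \<in> V \<and> y \<in> V"
    and ancestor_refl: "x \<in> V \<Longrightarrow> anc x x"
    and ancestor_trans: "anc x y \<Longrightarrow> anc y z \<Longrightarrow> anc x z"
    and ancestor_less: "anc x y \<Longrightarrow> x \<noteq> y \<Longrightarrow> d x < d y \<and> pre x < pre y \<and> post y \<le> post x"
    and ancestors_linear: "anc x z \<Longrightarrow> anc y z \<Longrightarrow> anc x y \<or> anc y x"
    and parent_exists: "y \<in> V \<Longrightarrow> 0 < d y \<Longrightarrow> \<exists>p. anc p y \<and> d p + 1 = d y \<and> E p y"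
    and edge_comparable: "E x y \<Longrightarrow> anc x y \<or> anc y x"
    and pre_le_post: "x \<in> V \<Longrightarrow> pre x \<le> post x"
    and incomparable_disjoint:
      "x \<in> V \<Longrightarrow> y \<in> V \<Longrightarrow> \<not> anc x y \<Longrightarrow> \<not> anc y x \<Longrightarrow> post x < pre y \<or> post y < pre x"
begin

lemma ancestor_at_depth: "y \<in> V \<Longrightarrow> k \<le> d y \<Longrightarrow> \<exists>z. anc z y \<and> d z = k"
proof (induction "d y - k" arbitrary: y)
  case 0
  then show ?case using ancestor_refl by auto
next
  case (Suc m)
  obtain p where p: "anc p y" "d p + 1 = d y" "E p y"
    using parent_exists Suc.prems Suc.hyps(2) by fastforce
  have "m = d p - k" "k \<le> d p"
    using p(2) Suc.hyps(2) by linarith+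
  then obtain z where "anc z p" "d z = k"
    using Suc.hyps(1) ancestor_in_V[OF p(1)] by blast
  then show ?case using ancestor_trans p(1) by blast
qed

lemma ancestor_depth_unique: "anc x z \<Longrightarrow> anc y z \<Longrightarrow> d x = d y \<Longrightarrow> x = y"
  using ancestors_linear ancestor_less by (metis less_irrefl)

lemma adjacent_if_child:
  assumes "anc v w" "d w = d v + 1"
  shows "E v w"
proof -
  obtain p where "anc p w" "d p + 1 = d w" "E p w"
    using parent_exists ancestor_in_V assms by fastforce
  with assms show ?thesis
    using ancestor_depth_unique by auto
qed

end

text \<open>Adding a new root \<open>r\<close> to a normal forest of \<open>F - r\<close>: the trees whose root is adjacent to
  \<open>r\<close> are hung below \<open>r\<close>, which is normal as long as every neighbour of \<open>r\<close> lies in such a tree.\<close>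
locale forest_extension = normal_forest V E anc d pre post for V E anc d pre post +
  fixes F :: "'a \<Rightarrow> 'a \<Rightarrow> bool" and r :: 'a
  assumes finite_V: "finite V"
    and new_root: "r \<notin> V"
    and edges_restrict: "E x y \<longleftrightarrow> F x y \<and> x \<noteq> r \<and> y \<noteq> r"
    and F_sym: "F x y \<Longrightarrow> F y x"
    and F_in: "F x y \<Longrightarrow> x \<in> insert r V \<and> y \<in> insert r V"
    and neighbour_root_adjacent: "F r y \<Longrightarrow> anc z y \<Longrightarrow> d z = 0 \<Longrightarrow> F r z"
begin

definition attached :: "'a set" where
  "attached = {y. \<exists>z. anc z y \<and> d z = 0 \<and> F r z}"

definition post_bound :: nat where
  "post_bound = Max (insert 0 (post ` V))"

definition ext_anc :: "'a \<Rightarrow> 'a \<Rightarrow> bool" where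
  "ext_anc x y \<longleftrightarrow> (x = r \<and> (y = r \<or> y \<in> attached)) \<or> anc x y"

definition ext_depth :: "'a \<Rightarrow> nat" where
  "ext_depth y = (if y = r then 0 else if y \<in> attached then d y + 1 else d y)"

definition ext_pre :: "'a \<Rightarrow> nat" where
  "ext_pre y = (if y = r then 0 else if y \<in> attached then pre y + 1 else pre y + post_bound + 2)"

definition ext_post :: "'a \<Rightarrow> nat" where
  "ext_post y =
     (if y = r then post_bound + 1 else if y \<in> attached then post y + 1 else post y + post_bound + 2)"

lemma post_le_bound: "y \<in> V \<Longrightarrow> post y \<le> post_bound"
  unfolding post_bound_def using finite_V by simp

lemma attached_subset: "attached \<subseteq> V"
  unfolding attached_def using ancestor_in_V by blast

lemma r_notin_attached: "r \<notin> attached"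
  using attached_subset new_root by blast

lemma ancestor_not_r: "anc x y \<Longrightarrow> x \<noteq> r \<and> y \<noteq> r"
  using ancestor_in_V new_root by blast

lemma attached_iff:
  assumes "anc a b"
  shows "a \<in> attached \<longleftrightarrow> b \<in> attached"
proof
  assume "a \<in> attached"
  then show "b \<in> attached"
    unfolding attached_def using assms ancestor_trans by blast
next
  assume "b \<in> attached"
  then obtain z where z: "anc z b" "d z = 0" "F r z"
    unfolding attached_def by blast
  obtain z' where z': "anc z' a" "d z' = 0"
    using ancestor_at_depth ancestor_in_V[OF assms] by blast
  have "z' = z"
    using ancestor_depth_unique[OF ancestor_trans[OF z'(1) assms] z(1)] z(2) z'(2) by simp
  then show "a \<in> attached"
    unfolding attached_def using z z' by blast
qed

lemma neighbour_attached:
  assumes "F r y" "y \<noteq> r"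
  shows "y \<in> attached"
proof -
  obtain z where "anc z y" "d z = 0"
    using ancestor_at_depth F_in assms by blast
  then show ?thesis
    unfolding attached_def using neighbour_root_adjacent assms(1) by blast
qed

lemma ext_anc_less:
  assumes "ext_anc x y" "x \<noteq> y"
  shows "ext_depth x < ext_depth y \<and> ext_pre x < ext_pre y \<and> ext_post y \<le> ext_post x"
proof (cases "x = r")
  case True
  then have "y \<in> attached"
    using assms ancestor_not_r unfolding ext_anc_def by blast
  then show ?thesis
    using True post_le_bound attached_subset r_notin_attached
    unfolding ext_depth_def ext_pre_def ext_post_def by fastforce
next
  case False
  then have xy: "anc x y"
    using assms(1) unfolding ext_anc_def by blast
  then show ?thesis
    using ancestor_less[OF xy assms(2)] ancestor_not_r[OF xy] attached_iff[OF xy]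
    unfolding ext_depth_def ext_pre_def ext_post_def by auto
qed

lemma ext_parent_exists:
  assumes y: "y \<in> insert r V" "0 < ext_depth y"
  shows "\<exists>p. ext_anc p y \<and> ext_depth p + 1 = ext_depth y \<and> F p y"
proof -
  have yV: "y \<in> V" "y \<noteq> r"
    using y unfolding ext_depth_def by auto
  consider "y \<in> attached" "d y = 0" | "0 < d y"
    using y(2) unfolding ext_depth_def by (auto split: if_splits)
  then show ?thesis
  proof cases
    case 1
    then obtain z where "anc z y" "d z = 0" "F r z"
      unfolding attached_def by blast
    then have "F r y"
      using ancestor_depth_unique[OF _ ancestor_refl[OF yV(1)]] 1(2) by metis
    then show ?thesis
      using 1 yV(2) r_notin_attached unfolding ext_anc_def ext_depth_def by auto
  next
    case 2
    then obtain p where p: "anc p y" "d p + 1 = d y" "E p y"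
      using parent_exists yV(1) by blast
    then show ?thesis
      using attached_iff[OF p(1)] ancestor_not_r[OF p(1)] edges_restrict
      unfolding ext_anc_def ext_depth_def by auto
  qed
qed

lemma ext_incomparable_disjoint:
  assumes "x \<in> insert r V" "y \<in> insert r V" "\<not> ext_anc x y" "\<not> ext_anc y x"
  shows "ext_post x < ext_pre y \<or> ext_post y < ext_pre x"
proof (cases "x = r \<or> y = r")
  case True
  then show ?thesis
    using assms unfolding ext_anc_def ext_post_def ext_pre_def by auto
next
  case False
  then have "x \<in> V" "y \<in> V" "\<not> anc x y" "\<not> anc y x"
    using assms unfolding ext_anc_def by auto
  then show ?thesis
    using incomparable_disjoint post_le_bound False unfolding ext_post_def ext_pre_def by fastforce
qed

lemma normal_forest_extended:
  "normal_forest (insert r V) F ext_anc ext_depth ext_pre ext_post"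
proof unfold_locales
  fix x y assume "ext_anc x y"
  then show "x \<in> insert r V \<and> y \<in> insert r V"
    unfolding ext_anc_def using attached_subset ancestor_in_V by blast
next
  fix x assume "x \<in> insert r V"
  then show "ext_anc x x"
    unfolding ext_anc_def using ancestor_refl by blast
next
  fix x y z assume "ext_anc x y" "ext_anc y z"
  then show "ext_anc x z"
    unfolding ext_anc_def using attached_iff ancestor_trans ancestor_not_r by metis
next
  fix x y z assume "ext_anc x z" "ext_anc y z"
  then show "ext_anc x y \<or> ext_anc y x"
    unfolding ext_anc_def using attached_iff ancestors_linear ancestor_not_r by metis
next
  fix x y assume "F x y"
  then show "ext_anc x y \<or> ext_anc y x"
    unfolding ext_anc_def using edge_comparable edges_restrict neighbour_attached F_sym by metis
next
  fix x assume "x \<in> insert r V"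
  then show "ext_pre x \<le> ext_post x"
    unfolding ext_pre_def ext_post_def using pre_le_post by auto
qed (use ext_anc_less ext_parent_exists ext_incomparable_disjoint in auto)

lemma ext_root_cases:
  assumes "ext_anc x y" "ext_depth x = 0"
  shows "x = r \<or> (anc x y \<and> d x = 0 \<and> \<not> F r x)"
proof (cases "x = r")
  case False
  then have "anc x y" "x \<notin> attached"
    using assms unfolding ext_anc_def ext_depth_def by (auto split: if_splits)
  moreover from this have "d x = 0"
    using assms(2) False unfolding ext_depth_def by simp
  ultimately show ?thesis
    using ancestor_refl ancestor_in_V unfolding attached_def by blast
qed simp

end

text \<open>Induction on the number of vertices, removing a vertex \<open>r\<close> of maximal weight: raising the
  weight of its neighbours above all others forces every tree containing a neighbour of \<open>r\<close> to have
  a neighbour of \<open>r\<close> as its root.\<close>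
lemma normal_forest_exists:
  fixes w :: "'a \<Rightarrow> nat"
  assumes "finite V" "\<And>x y. E x y \<Longrightarrow> x \<in> V \<and> y \<in> V" "\<And>x y. E x y \<Longrightarrow> E y x"
  shows "\<exists>anc d pre post. normal_forest V E anc d pre post \<and>
           (\<forall>x y. anc x y \<longrightarrow> d x = 0 \<longrightarrow> w y \<le> w x)"
  using assms
proof (induction V arbitrary: E w rule: finite_remove_induct)
  case empty
  have "normal_forest {} E (\<lambda>_ _. False) (\<lambda>_. 0) (\<lambda>_. 0) (\<lambda>_. 0)"
    by unfold_locales (use empty.prems in auto)
  then show ?case by blast
next
  case (remove V)
  have "Max (w ` V) \<in> w ` V"
    using remove.hyps(1,2) by simp
  then obtain r where "r \<in> V" "w r = Max (w ` V)"
    by (metis imageE)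
  then have r: "r \<in> V" "\<And>v. v \<in> V \<Longrightarrow> w v \<le> w r"
    using remove.hyps(1) by auto
  define E' where "E' x y \<longleftrightarrow> E x y \<and> x \<noteq> r \<and> y \<noteq> r" for x y
  define w' where "w' u = (if E r u then w r + 1 else w u)" for u
  have "\<exists>anc d pre post. normal_forest (V - {r}) E' anc d pre post \<and>
          (\<forall>x y. anc x y \<longrightarrow> d x = 0 \<longrightarrow> w' y \<le> w' x)"
  proof (rule remove.IH[OF r(1)])
    show "E' x y \<Longrightarrow> x \<in> V - {r} \<and> y \<in> V - {r}" for x y
      using remove.prems(1) unfolding E'_def by auto
    show "E' x y \<Longrightarrow> E' y x" for x y
      using remove.prems(2) unfolding E'_def by auto
  qed
  then obtain anc d pre post where forest: "normal_forest (V - {r}) E' anc d pre post"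
    and roots: "\<And>x y. anc x y \<Longrightarrow> d x = 0 \<Longrightarrow> w' y \<le> w' x"
    by blast
  interpret forest_extension "V - {r}" E' anc d pre post E r
  proof (intro forest_extension.intro forest forest_extension_axioms.intro)
    fix y z assume "E r y" "anc z y" "d z = 0"
    then have "w r < w' z"
      using roots[of z y] unfolding w'_def by simp
    then show "E r z"
      using r(2)[of z] normal_forest.ancestor_in_V[OF forest \<open>anc z y\<close>] unfolding w'_def
      by (auto split: if_splits)
  qed (use remove.hyps(1) remove.prems E'_def in auto)
  have "w y \<le> w x" if "ext_anc x y" "ext_depth x = 0" for x y
    using ext_root_cases[OF that]
  proof
    assume "x = r"
    then show ?thesis
      using r(2) normal_forest.ancestor_in_V[OF normal_forest_extended that(1)] by blast
  next
    assume x: "anc x y \<and> d x = 0 \<and> \<not> E r x"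
    then show ?thesis
      using roots[of x y] r(2)[of y] ancestor_in_V unfolding w'_def by (auto split: if_splits)
  qed
  moreover have "insert r (V - {r}) = V"
    using r(1) by blast
  ultimately show ?case
    using normal_forest_extended by metis
qed

context normal_forest
begin

lemma edge_span_bound:
  assumes "finite V"
  obtains W where "\<And>x y. E x y \<Longrightarrow> d y - d x \<le> W" "W = 0 \<or> (\<exists>x y. E x y \<and> d y - d x = W)"
proof -
  have "{(x, y). E x y} \<subseteq> V \<times> V"
    using edge_comparable ancestor_in_V by blast
  then have "finite ((\<lambda>(x, y). d y - d x) ` {(x, y). E x y})" (is "finite ?S")
    using assms finite_subset by blast
  define W where "W = Max (insert 0 ?S)"
  show ?thesis
  proof (rule that)
    show "d y - d x \<le> W" if "E x y" for x y
      unfolding W_def using \<open>finite ?S\<close> that by (intro Max_ge) force+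
    have "W \<in> insert 0 ?S"
      unfolding W_def using \<open>finite ?S\<close> by (intro Max_in) auto
    then show "W = 0 \<or> (\<exists>x y. E x y \<and> d y - d x = W)"
      by auto
  qed
qed

definition ancestor_at :: "'a \<Rightarrow> nat \<Rightarrow> 'a" where
  "ancestor_at y k = (SOME z. anc z y \<and> d z = k)"

lemma ancestor_at:
  assumes "y \<in> V" "k \<le> d y"
  shows "anc (ancestor_at y k) y" "d (ancestor_at y k) = k"
  using someI_ex[OF ancestor_at_depth[OF assms]] unfolding ancestor_at_def by auto

lemma ancestor_at_eq: "anc z y \<Longrightarrow> ancestor_at y (d z) = z"
  using ancestor_at[of y "d z"] ancestor_in_V ancestor_less ancestor_depth_unique
  by (metis less_or_eq_imp_le)

lemma ancestor_path_edge:
  assumes "y \<in> V" "k < d y"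
  shows "E (ancestor_at y k) (ancestor_at y (Suc k))"
proof -
  let ?a = "ancestor_at y k" and ?b = "ancestor_at y (Suc k)"
  have a: "anc ?a y" "d ?a = k" and b: "anc ?b y" "d ?b = Suc k"
    using ancestor_at assms by auto
  have "anc ?a ?b"
    using ancestors_linear[OF a(1) b(1)] ancestor_less[of ?b ?a] a(2) b(2) by fastforce
  then show ?thesis
    using adjacent_if_child a(2) b(2) by simp
qed

text \<open>The tree path from \<open>x\<close> down to \<open>y\<close> closed by the edge \<open>y x\<close>.\<close>
lemma cycle_of_long_edge:
  assumes sym: "\<And>x y. E x y \<Longrightarrow> E y x"
    and edge: "E x y" "d y - d x = W" and W: "2 \<le> W"
  shows "\<exists>cs. simple_cycle V E cs \<and> length cs = W + 1"
proof -
  have "anc x y"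
    using edge_comparable[OF edge(1)] ancestor_less[of y x] edge(2) W by fastforce
  then have xy: "E x y" "anc x y" "d y = d x + W"
    using edge W by auto
  have yV: "y \<in> V" using ancestor_in_V xy(2) by blast
  define cs where "cs = map (ancestor_at y) [d x..<Suc (d y)]"
  have len: "length cs = W + 1"
    unfolding cs_def using xy(3) by simp
  have nth: "cs ! i = ancestor_at y (d x + i)" if "i \<le> W" for i
    unfolding cs_def using that xy(3) by (simp add: nth_upt del: upt_Suc)
  have "inj_on (ancestor_at y) {d x..<Suc (d y)}"
    using ancestor_at(2)[OF yV] by (intro inj_onI) (metis atLeastLessThan_iff less_Suc_eq_le)
  then have "distinct cs"
    unfolding cs_def by (simp only: distinct_map distinct_upt set_upt)
  moreover have "ancestor_at y k \<in> V" if "k \<le> d y" for k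
    using ancestor_at(1)[OF yV that] ancestor_in_V by blast
  then have "set cs \<subseteq> V"
    unfolding cs_def by auto
  moreover have "E (cs ! i) (cs ! ((i + 1) mod length cs))" if "i < length cs" for i
  proof (cases "i < W")
    case True
    then show ?thesis
      using nth ancestor_path_edge[OF yV, of "d x + i"] len xy(3) by simp
  next
    case False
    then have "i = W" using that len by simp
    then show ?thesis
      using nth[of 0] nth[of W] len xy(1,3) sym ancestor_at_eq[OF xy(2)] ancestor_refl[OF yV]
        ancestor_at_eq[of y y] by simp
  qed
  ultimately show ?thesis
    unfolding simple_cycle_def using len W by auto
qed

text \<open>Box coordinates for a forest in which every edge spans at most \<open>W\<close> levels: coordinate 0 is the
  interval \<open>[pre, post]\<close>, coordinate 1 the depth window \<open>[d, d + W]\<close>, and coordinate \<open>j + 2\<close> for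
  \<open>j \<le> W\<close> deals with the residue class \<open>j\<close> of depths modulo \<open>W + 1\<close>: a vertex of that class is the
  point \<open>pre\<close>, a vertex missing an edge to a close ancestor of that class gets \<open>[pre, post]\<close>, and all
  other vertices get \<open>[0, post]\<close>. Within distance \<open>W\<close> an ancestor is determined by its residue.\<close>
definition misses_residue :: "nat \<Rightarrow> nat \<Rightarrow> 'a \<Rightarrow> bool" where
  "misses_residue W j v \<longleftrightarrow>
     (\<exists>x. anc x v \<and> x \<noteq> v \<and> d x mod (W + 1) = j \<and> d v - d x \<le> W \<and> \<not> E x v)"

definition box_lo :: "nat \<Rightarrow> nat \<Rightarrow> 'a \<Rightarrow> nat" where
  "box_lo W i v =
     (if i = 0 then pre v else if i = 1 then d v
      else if d v mod (W + 1) = i - 2 \<or> misses_residue W (i - 2) v then pre v else 0)"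

definition box_hi :: "nat \<Rightarrow> nat \<Rightarrow> 'a \<Rightarrow> nat" where
  "box_hi W i v =
     (if i = 0 then post v else if i = 1 then d v + W
      else if d v mod (W + 1) = i - 2 then pre v else post v)"

definition boxes_meet :: "nat \<Rightarrow> nat \<Rightarrow> 'a \<Rightarrow> 'a \<Rightarrow> bool" where
  "boxes_meet W n v w \<longleftrightarrow> (\<forall>i<n. box_lo W i v \<le> box_hi W i w \<and> box_lo W i w \<le> box_hi W i v)"

lemma boxes_meet_mono: "m \<le> n \<Longrightarrow> boxes_meet W n v w \<Longrightarrow> boxes_meet W m v w"
  unfolding boxes_meet_def by simp

lemma box_lo_le_hi: "v \<in> V \<Longrightarrow> box_lo W i v \<le> box_hi W i v"
  unfolding box_lo_def box_hi_def using pre_le_post by auto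

lemma close_ancestors_same_residue:
  assumes "anc x w" "anc v w" "d w - d x \<le> W" "d w - d v \<le> W"
    and "d x mod (W + 1) = d v mod (W + 1)"
  shows "x = v"
proof -
  have "d x \<le> d w" "d v \<le> d w"
    using assms(1,2) ancestor_less by (metis less_or_eq_imp_le)+
  then have "d x = d v"
    using assms(3,4) by (intro mod_eq_close_imp_eq[OF assms(5)]) linarith+
  then show ?thesis
    using ancestor_depth_unique assms(1,2) by blast
qed

lemma boxes_meet_if_adjacent:
  assumes span: "\<And>x y. E x y \<Longrightarrow> d y - d x \<le> W"
    and vw: "anc v w" "v \<noteq> w" "E v w"
  shows "boxes_meet W (W + 3) v w"
  unfolding boxes_meet_def
proof (intro allI impI)
  fix i assume "i < W + 3"
  have less: "d v < d w" "pre v < pre w" "post w \<le> post v"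
    using ancestor_less[OF vw(1,2)] by auto
  have gap: "d w - d v \<le> W"
    using span vw(3) by blast
  have distinct_residues: "d v mod (W + 1) \<noteq> d w mod (W + 1)"
    using mod_eq_close_imp_eq[of "d v" "W + 1" "d w"] less(1) gap by auto
  have "\<not> misses_residue W (d v mod (W + 1)) w"
    using close_ancestors_same_residue[OF _ vw(1) _ gap] vw(3)
    unfolding misses_residue_def by blast
  then show "box_lo W i v \<le> box_hi W i w \<and> box_lo W i w \<le> box_hi W i v"
    unfolding box_lo_def box_hi_def
    using less gap distinct_residues pre_le_post[of v] pre_le_post[of w] ancestor_in_V[OF vw(1)]
    by auto
qed

lemma boxes_meet_imp_adjacent:
  assumes vw: "anc v w" "v \<noteq> w" "boxes_meet W (W + 3) v w"
  shows "E v w"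
proof (rule ccontr)
  assume "\<not> E v w"
  let ?j = "d v mod (W + 1)"
  have less: "d v < d w" "pre v < pre w"
    using ancestor_less[OF vw(1,2)] by auto
  have "box_lo W 1 w \<le> box_hi W 1 v"
    using vw(3) unfolding boxes_meet_def by simp
  then have gap: "d w - d v \<le> W"
    unfolding box_lo_def box_hi_def by simp
  have "d w mod (W + 1) \<noteq> ?j"
    using mod_eq_close_imp_eq[of "d v" "W + 1" "d w"] less(1) gap by auto
  moreover have "misses_residue W ?j w"
    unfolding misses_residue_def using vw(1,2) gap \<open>\<not> E v w\<close> by blast
  moreover have "box_lo W (?j + 2) w \<le> box_hi W (?j + 2) v"
    using vw(3) unfolding boxes_meet_def by auto
  ultimately show False
    unfolding box_lo_def box_hi_def using less(2) by auto
qed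

lemma boxes_meet_two_imp_adjacent:
  assumes "W \<le> 1" "anc v w" "v \<noteq> w" "boxes_meet W 2 v w"
  shows "E v w"
proof -
  have "d v < d w" "d w \<le> d v + W"
    using ancestor_less[OF assms(2,3)] assms(4)
    unfolding boxes_meet_def box_lo_def box_hi_def by (auto dest: spec[of _ 1])
  then show ?thesis
    using adjacent_if_child[OF assms(2)] assms(1) by simp
qed

lemma box_rep_if_ancestor_pairs:
  assumes sym: "\<And>x y. E x y \<Longrightarrow> E y x" and n: "0 < n"
    and pairs: "\<And>v w. anc v w \<Longrightarrow> v \<noteq> w \<Longrightarrow> E v w \<longleftrightarrow> boxes_meet W n v w"
  shows "box_rep V E n (\<lambda>i v. real (box_lo W i v)) (\<lambda>i v. real (box_hi W i v))"
  unfolding box_rep_def of_nat_le_iff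
proof (intro conjI ballI allI impI)
  fix v i assume "v \<in> V"
  then show "box_lo W i v \<le> box_hi W i v" by (rule box_lo_le_hi)
next
  fix v w assume vw: "v \<in> V" "w \<in> V" "v \<noteq> w"
  consider "anc v w" | "anc w v" | "\<not> anc v w" "\<not> anc w v" by blast
  then show "E v w \<longleftrightarrow> (\<forall>i<n. box_lo W i v \<le> box_hi W i w \<and> box_lo W i w \<le> box_hi W i v)"
  proof cases
    case 1
    then show ?thesis using pairs vw(3) unfolding boxes_meet_def by blast
  next
    case 2
    then show ?thesis using pairs[of w v] vw(3) sym unfolding boxes_meet_def by blast
  next
    case 3
    then have "\<not> E v w"
      using edge_comparable by blast
    moreover have "post v < pre w \<or> post w < pre v"
      using incomparable_disjoint vw 3 by blast
    then have "\<not> (box_lo W 0 v \<le> box_hi W 0 w \<and> box_lo W 0 w \<le> box_hi W 0 v)"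
      unfolding box_lo_def box_hi_def by auto
    ultimately show ?thesis using n by blast
  qed
qed

lemma box_rep_edge_span:
  assumes "\<And>x y. E x y \<Longrightarrow> E y x" "\<And>x y. E x y \<Longrightarrow> d y - d x \<le> W"
  shows "\<exists>l u. box_rep V E (W + 3) l u"
  using box_rep_if_ancestor_pairs boxes_meet_if_adjacent boxes_meet_imp_adjacent assms
  by (metis zero_less_numeral add_gr_0)

lemma box_rep_edge_span_le_one:
  assumes "\<And>x y. E x y \<Longrightarrow> E y x" "\<And>x y. E x y \<Longrightarrow> d y - d x \<le> W" "W \<le> 1"
  shows "\<exists>l u. box_rep V E 2 l u"
proof -
  have "E v w \<longleftrightarrow> boxes_meet W 2 v w" if "anc v w" "v \<noteq> w" for v w
    using boxes_meet_if_adjacent[OF assms(2) that] boxes_meet_two_imp_adjacent[OF assms(3) that]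
      boxes_meet_mono[of 2 "W + 3"] by auto
  then have "box_rep V E 2 (\<lambda>i v. real (box_lo W i v)) (\<lambda>i v. real (box_hi W i v))"
    using assms(1) by (intro box_rep_if_ancestor_pairs) auto
  then show ?thesis by blast
qed

end


theorem theorem13:
  fixes V :: "'a set" and E :: "'a \<Rightarrow> 'a \<Rightarrow> bool" and b :: nat
  assumes "simple_graph V E"
    and "boxicity V E = b"
    and "3 \<le> b"
  shows "\<exists>cs. simple_cycle V E cs \<and> b - 3 \<le> length cs"
proof -
  have fin: "finite V" and sym: "\<And>x y. E x y \<Longrightarrow> E y x"
    and in_V: "\<And>x y. E x y \<Longrightarrow> x \<in> V \<and> y \<in> V"
    using assms(1) unfolding simple_graph_def by auto
  obtain anc d pre post where "normal_forest V E anc d pre post"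
    using normal_forest_exists[of V E "\<lambda>_. 0"] fin in_V sym by blast
  then interpret normal_forest V E anc d pre post .
  obtain W where span: "\<And>x y. E x y \<Longrightarrow> d y - d x \<le> W"
    and attained: "W = 0 \<or> (\<exists>x y. E x y \<and> d y - d x = W)"
    using edge_span_bound fin by blast
  have "b \<le> W + 3"
    using box_rep_edge_span[OF sym span] boxicity_le assms(2) by blast
  have "2 \<le> W"
  proof (rule ccontr)
    assume "\<not> 2 \<le> W"
    then have "b \<le> 2"
      using box_rep_edge_span_le_one[OF sym span] boxicity_le assms(2) by fastforce
    then show False
      using assms(3) by simp
  qed
  then obtain x y where "E x y" "d y - d x = W"
    using attained by auto
  then obtain cs where "simple_cycle V E cs" "length cs = W + 1"
    using cycle_of_long_edge[OF sym] \<open>2 \<le> W\<close> by blast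
  then show ?thesis
    using \<open>b \<le> W + 3\<close> by auto
qed

end
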